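(* Let $\mathcal{C}$ be a category, let $\mathcal{M}$ be a class of morphisms of $\mathcal{C}$, and let $T$ be an object of $\mathcal{C}$. Let $\mathcal{M}/T$ be the category whose objects are pairs $(S,s)$ with $s : S \to T$ in $\mathcal{M}$ and whose morphisms $f:(S,s)\to(S',s')$ are morphisms $f:S\to S'$ of $\mathcal{C}$ with $s'\circ f = s$. Define $T_{\mathcal{M}} : \mathcal{M}/T \to \mathcal{C}$ by $T_{\mathcal{M}}(S,s) = S$, $T_{\mathcal{M}}f = f$, and $\tau_{(S,s)} = s$. Then $(\mathcal{M}/T, T_{\mathcal{M}}, \tau)$ is an $\mathcal{M}$-grading of $T$, and it is a pseudoterminal object of the 2-category $\mathrm{Grade}_{\mathcal{M}}(T)$. Explicitly, for every $\mathcal{M}$-grading $(\mathcal{G},G,g)$ of $T$: (i) there exists a morphism of $\mathcal{M}$-gradings $(F,f) : (\mathcal{G},G,g) \to (\mathcal{M}/T, T_{\mathcal{M}}, \tau)$; and (ii) this morphism is essentially unique, in the sense that there is an assignment, natural in $(F',f')$, of an invertible 2-cell $(F',f') \cong (F,f)$ to every morphism of $\mathcal{M}$-gradings $(F',f') : (\mathcal{G},G,g) \to (\mathcal{M}/T, T_{\mathcal{M}}, \tau)$.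
   Context: An $\mathcal{M}$-grading $(\mathcal{G},G,g)$ of an object $T$ of $\mathcal{C}$ consists of a category $\mathcal{G}$, a functor $G:\mathcal{G}\to\mathcal{C}$, and a natural transformation with components $g_d : Gd \to T$ (i.e. a cocone from $G$ to $T$) all of which lie in $\mathcal{M}$. A morphism $(F,f):(\mathcal{G},G,g)\to(\mathcal{G}',G',g')$ is a functor $F:\mathcal{G}\to\mathcal{G}'$ together with a natural isomorphism $f : G'\cdot F \cong G$ such that $g_d\circ f_d = g'_{Fd}$ for all $d$. A 2-cell $\beta:(F,f)\Rightarrow(F',f')$ is a natural transformation $\beta:F\Rightarrow F'$ with $f'\circ(G'\cdot\beta) = f$. These data form the 2-category $\mathrm{Grade}_{\mathcal{M}}(T)$. *)

theory Defs
  imports Main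
begin

record ('o, 'm) cat =
  Ob   :: "'o set"
  Ar   :: "'m set"
  Dom  :: "'m \<Rightarrow> 'o"
  Cod  :: "'m \<Rightarrow> 'o"
  Idt  :: "'o \<Rightarrow> 'm"
  Comp :: "'m \<Rightarrow> 'm \<Rightarrow> 'm"   (* Comp C g f = g \<circ> f *)

definition hom :: "('o, 'm) cat \<Rightarrow> 'o \<Rightarrow> 'o \<Rightarrow> 'm set" where
  "hom C a b = {f \<in> Ar C. Dom C f = a \<and> Cod C f = b}"

definition category :: "('o, 'm) cat \<Rightarrow> bool" where
  "category C \<longleftrightarrow>
     (\<forall>f \<in> Ar C. Dom C f \<in> Ob C \<and> Cod C f \<in> Ob C) \<and>
     (\<forall>a \<in> Ob C. Idt C a \<in> hom C a a) \<and>
     (\<forall>f \<in> Ar C. \<forall>g \<in> Ar C. Cod C f = Dom C g \<longrightarrow>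
         Comp C g f \<in> hom C (Dom C f) (Cod C g)) \<and>
     (\<forall>f \<in> Ar C. Comp C (Idt C (Cod C f)) f = f \<and> Comp C f (Idt C (Dom C f)) = f) \<and>
     (\<forall>f \<in> Ar C. \<forall>g \<in> Ar C. \<forall>h \<in> Ar C. Cod C f = Dom C g \<longrightarrow> Cod C g = Dom C h \<longrightarrow>
         Comp C h (Comp C g f) = Comp C (Comp C h g) f)"

definition iso :: "('o, 'm) cat \<Rightarrow> 'm \<Rightarrow> bool" where
  "iso C f \<longleftrightarrow> f \<in> Ar C \<and>
     (\<exists>g \<in> hom C (Cod C f) (Dom C f).
        Comp C g f = Idt C (Dom C f) \<and> Comp C f g = Idt C (Cod C f))"

definition is_functor :: "('o, 'm) cat \<Rightarrow> ('p, 'n) cat \<Rightarrow> ('o \<Rightarrow> 'p) \<Rightarrow> ('m \<Rightarrow> 'n) \<Rightarrow> bool" where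
  "is_functor C D Fo Fm \<longleftrightarrow> category C \<and> category D \<and>
     (\<forall>a \<in> Ob C. Fo a \<in> Ob D) \<and>
     (\<forall>f \<in> Ar C. Fm f \<in> hom D (Fo (Dom C f)) (Fo (Cod C f))) \<and>
     (\<forall>a \<in> Ob C. Fm (Idt C a) = Idt D (Fo a)) \<and>
     (\<forall>f \<in> Ar C. \<forall>g \<in> Ar C. Cod C f = Dom C g \<longrightarrow>
         Fm (Comp C g f) = Comp D (Fm g) (Fm f))"

definition nat_trans ::
  "('o, 'm) cat \<Rightarrow> ('p, 'n) cat \<Rightarrow> ('o \<Rightarrow> 'p) \<Rightarrow> ('m \<Rightarrow> 'n) \<Rightarrow> ('o \<Rightarrow> 'p) \<Rightarrow> ('m \<Rightarrow> 'n)
     \<Rightarrow> ('o \<Rightarrow> 'n) \<Rightarrow> bool" where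
  "nat_trans C D Fo Fm Go Gm eta \<longleftrightarrow> is_functor C D Fo Fm \<and> is_functor C D Go Gm \<and>
     (\<forall>a \<in> Ob C. eta a \<in> hom D (Fo a) (Go a)) \<and>
     (\<forall>f \<in> Ar C. Comp D (eta (Cod C f)) (Fm f) = Comp D (Gm f) (eta (Dom C f)))"

definition nat_iso ::
  "('o, 'm) cat \<Rightarrow> ('p, 'n) cat \<Rightarrow> ('o \<Rightarrow> 'p) \<Rightarrow> ('m \<Rightarrow> 'n) \<Rightarrow> ('o \<Rightarrow> 'p) \<Rightarrow> ('m \<Rightarrow> 'n)
     \<Rightarrow> ('o \<Rightarrow> 'n) \<Rightarrow> bool" where
  "nat_iso C D Fo Fm Go Gm eta \<longleftrightarrow> nat_trans C D Fo Fm Go Gm eta \<and> (\<forall>a \<in> Ob C. iso D (eta a))"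

definition grading ::
  "('o, 'm) cat \<Rightarrow> 'm set \<Rightarrow> 'o \<Rightarrow> ('a, 'b) cat \<Rightarrow> ('a \<Rightarrow> 'o) \<Rightarrow> ('b \<Rightarrow> 'm) \<Rightarrow> ('a \<Rightarrow> 'm) \<Rightarrow> bool" where
  "grading C M T Gr Go Gm g \<longleftrightarrow> is_functor Gr C Go Gm \<and> T \<in> Ob C \<and>
     (\<forall>d \<in> Ob Gr. g d \<in> hom C (Go d) T \<and> g d \<in> M) \<and>
     (\<forall>u \<in> Ar Gr. Comp C (g (Cod Gr u)) (Gm u) = g (Dom Gr u))"

definition grading_mor ::
  "('o, 'm) cat \<Rightarrow> ('a, 'b) cat \<Rightarrow> ('a \<Rightarrow> 'o) \<Rightarrow> ('b \<Rightarrow> 'm) \<Rightarrow> ('a \<Rightarrow> 'm) \<Rightarrow>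
   ('c, 'e) cat \<Rightarrow> ('c \<Rightarrow> 'o) \<Rightarrow> ('e \<Rightarrow> 'm) \<Rightarrow> ('c \<Rightarrow> 'm) \<Rightarrow>
   ('a \<Rightarrow> 'c) \<Rightarrow> ('b \<Rightarrow> 'e) \<Rightarrow> ('a \<Rightarrow> 'm) \<Rightarrow> bool" where
  "grading_mor C Gr Go Gm g Gr' Go' Gm' g' Fo Fm f \<longleftrightarrow>
     is_functor Gr Gr' Fo Fm \<and>
     nat_iso Gr C (Go' \<circ> Fo) (Gm' \<circ> Fm) Go Gm f \<and>
     (\<forall>d \<in> Ob Gr. Comp C (g d) (f d) = g' (Fo d))"

definition grading_2cell ::
  "('o, 'm) cat \<Rightarrow> ('a, 'b) cat \<Rightarrow> ('c, 'e) cat \<Rightarrow> ('e \<Rightarrow> 'm) \<Rightarrow>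
   ('a \<Rightarrow> 'c) \<Rightarrow> ('b \<Rightarrow> 'e) \<Rightarrow> ('a \<Rightarrow> 'm) \<Rightarrow>
   ('a \<Rightarrow> 'c) \<Rightarrow> ('b \<Rightarrow> 'e) \<Rightarrow> ('a \<Rightarrow> 'm) \<Rightarrow> ('a \<Rightarrow> 'e) \<Rightarrow> bool" where
  "grading_2cell C Gr Gr' Gm' Fo Fm f Fo' Fm' f' \<beta> \<longleftrightarrow>
     nat_trans Gr Gr' Fo Fm Fo' Fm' \<beta> \<and>
     (\<forall>d \<in> Ob Gr. Comp C (f' d) (Gm' (\<beta> d)) = f d)"

definition grading_inv_2cell ::
  "('o, 'm) cat \<Rightarrow> ('a, 'b) cat \<Rightarrow> ('c, 'e) cat \<Rightarrow> ('e \<Rightarrow> 'm) \<Rightarrow>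
   ('a \<Rightarrow> 'c) \<Rightarrow> ('b \<Rightarrow> 'e) \<Rightarrow> ('a \<Rightarrow> 'm) \<Rightarrow>
   ('a \<Rightarrow> 'c) \<Rightarrow> ('b \<Rightarrow> 'e) \<Rightarrow> ('a \<Rightarrow> 'm) \<Rightarrow> ('a \<Rightarrow> 'e) \<Rightarrow> bool" where
  "grading_inv_2cell C Gr Gr' Gm' Fo Fm f Fo' Fm' f' \<beta> \<longleftrightarrow>
     grading_2cell C Gr Gr' Gm' Fo Fm f Fo' Fm' f' \<beta> \<and>
     (\<exists>\<gamma>. grading_2cell C Gr Gr' Gm' Fo' Fm' f' Fo Fm f \<gamma> \<and>
        (\<forall>d \<in> Ob Gr. Comp Gr' (\<gamma> d) (\<beta> d) = Idt Gr' (Fo d) \<and>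
                      Comp Gr' (\<beta> d) (\<gamma> d) = Idt Gr' (Fo' d)))"

text \<open>Objects are pairs (S, s) with s : S \<rightarrow> T in M; an arrow f : (S,s) \<rightarrow> (S',s') is
  represented as the triple ((S,s), f, (S',s')).\<close>
definition slice :: "('o, 'm) cat \<Rightarrow> 'm set \<Rightarrow> 'o \<Rightarrow> ('o \<times> 'm, ('o \<times> 'm) \<times> 'm \<times> ('o \<times> 'm)) cat" where
  "slice C M T = \<lparr>
     Ob = {(S, s). s \<in> M \<and> s \<in> hom C S T},
     Ar = {((S, s), f, (S', s')). s \<in> M \<and> s \<in> hom C S T \<and> s' \<in> M \<and> s' \<in> hom C S' T \<and>
              f \<in> hom C S S' \<and> Comp C s' f = s},
     Dom = (\<lambda>(a, f, b). a),
     Cod = (\<lambda>(a, f, b). b),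
     Idt = (\<lambda>a. (a, Idt C (fst a), a)),
     Comp = (\<lambda>(b, g, c) (a, f, b'). (a, Comp C g f, c)) \<rparr>"

definition slice_Fo :: "'o \<times> 'm \<Rightarrow> 'o" where "slice_Fo = fst"
definition slice_Fm :: "('o \<times> 'm) \<times> 'm \<times> ('o \<times> 'm) \<Rightarrow> 'm" where "slice_Fm = (\<lambda>(a, f, b). f)"
definition slice_tau :: "'o \<times> 'm \<Rightarrow> 'm" where "slice_tau = snd"

end

(* A grading (G, g) of T is classified by the functor d \<mapsto> (G d, g d) into M/T together
   with the identity isomorphism.  For any other morphism (F', f') into M/T the triangle law
   says that F' d is the object (S, g d \<circ> f' d), so f' d itself is an arrow F' d \<rightarrow> (G d, g d)
   of M/T, and so is its inverse.  Since the forgetful functor M/T \<rightarrow> C is faithful,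
   naturality of these arrows and their compatibility with 2-cells reduce to the
   corresponding equations in C, which are the naturality of f' and the 2-cell law. *)

theory Submission
  imports Defs
begin

lemma category_hom_objects: "category C \<Longrightarrow> f \<in> hom C a b \<Longrightarrow> a \<in> Ob C \<and> b \<in> Ob C"
  unfolding category_def hom_def by auto

lemma category_Idt_hom: "category C \<Longrightarrow> a \<in> Ob C \<Longrightarrow> Idt C a \<in> hom C a a"
  by (simp add: category_def)

lemma category_Comp_hom:
  "category C \<Longrightarrow> f \<in> hom C a b \<Longrightarrow> g \<in> hom C b c \<Longrightarrow> Comp C g f \<in> hom C a c"
  unfolding category_def hom_def by auto

lemma category_Idt_left: "category C \<Longrightarrow> f \<in> hom C a b \<Longrightarrow> Comp C (Idt C b) f = f"
  unfolding category_def hom_def by auto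

lemma category_Idt_right: "category C \<Longrightarrow> f \<in> hom C a b \<Longrightarrow> Comp C f (Idt C a) = f"
  unfolding category_def hom_def by auto

lemma category_Comp_assoc:
  "category C \<Longrightarrow> f \<in> hom C a b \<Longrightarrow> g \<in> hom C b c \<Longrightarrow> h \<in> hom C c d \<Longrightarrow>
   Comp C h (Comp C g f) = Comp C (Comp C h g) f"
  unfolding category_def hom_def by auto

lemma iso_Idt:
  assumes C: "category C" and a: "a \<in> Ob C"
  shows "iso C (Idt C a)"
proof -
  have Idt: "Idt C a \<in> hom C a a"
    by (rule category_Idt_hom[OF C a])
  then have "Comp C (Idt C a) (Idt C a) = Idt C a"
    by (rule category_Idt_left[OF C])
  with Idt show ?thesis
    unfolding iso_def by (auto simp: hom_def)
qed

lemma iso_obtain_inverse: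
  assumes "iso C f" and "f \<in> hom C a b"
  obtains f' where "f' \<in> hom C b a" "Comp C f' f = Idt C a" "Comp C f f' = Idt C b"
  using assms unfolding iso_def hom_def by auto

lemma inverses_commute_square:
  assumes C: "category C"
    and a: "a \<in> hom C X Y" and a': "a' \<in> hom C Y X" and aa': "Comp C a a' = Idt C Y"
    and b: "b \<in> hom C X' Y'" and b': "b' \<in> hom C Y' X'" and b'b: "Comp C b' b = Idt C X'"
    and h: "h \<in> hom C X X'" and m: "m \<in> hom C Y Y'" and square: "Comp C b h = Comp C m a"
  shows "Comp C b' m = Comp C h a'"
proof -
  have "Comp C b' m = Comp C b' (Comp C m (Comp C a a'))"
    using aa' category_Idt_right[OF C m] by simp
  also have "\<dots> = Comp C b' (Comp C (Comp C b h) a')"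
    using category_Comp_assoc[OF C a' a m] square by simp
  also have "\<dots> = Comp C (Comp C b' b) (Comp C h a')"
    using category_Comp_assoc[OF C a' h b] category_Comp_assoc[OF C category_Comp_hom[OF C a' h] b b']
    by simp
  also have "\<dots> = Comp C h a'"
    using b'b category_Idt_left[OF C category_Comp_hom[OF C a' h]] by simp
  finally show ?thesis .
qed

lemma nat_iso_obtain_inverse:
  assumes \<eta>: "nat_iso A B Fo Fm Go Gm \<eta>"
  obtains \<epsilon> where "nat_trans A B Go Gm Fo Fm \<epsilon>"
    and "\<forall>a \<in> Ob A. Comp B (\<epsilon> a) (\<eta> a) = Idt B (Fo a) \<and> Comp B (\<eta> a) (\<epsilon> a) = Idt B (Go a)"
proof -
  have F: "is_functor A B Fo Fm" and G: "is_functor A B Go Gm"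
    and \<eta>_hom: "\<forall>a \<in> Ob A. \<eta> a \<in> hom B (Fo a) (Go a)"
    and \<eta>_nat: "\<forall>u \<in> Ar A. Comp B (\<eta> (Cod A u)) (Fm u) = Comp B (Gm u) (\<eta> (Dom A u))"
    and \<eta>_iso: "\<forall>a \<in> Ob A. iso B (\<eta> a)"
    using \<eta> by (auto simp: nat_iso_def nat_trans_def)
  have A: "category A" and B: "category B"
    using F by (auto simp: is_functor_def)
  have "\<forall>a \<in> Ob A. \<exists>e. e \<in> hom B (Go a) (Fo a) \<and>
          Comp B e (\<eta> a) = Idt B (Fo a) \<and> Comp B (\<eta> a) e = Idt B (Go a)"
    using \<eta>_hom \<eta>_iso by (metis iso_obtain_inverse)
  then obtain \<epsilon> where \<epsilon>: "\<forall>a \<in> Ob A. \<epsilon> a \<in> hom B (Go a) (Fo a) \<and>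
          Comp B (\<epsilon> a) (\<eta> a) = Idt B (Fo a) \<and> Comp B (\<eta> a) (\<epsilon> a) = Idt B (Go a)"
    by metis
  have "Comp B (\<epsilon> (Cod A u)) (Gm u) = Comp B (Fm u) (\<epsilon> (Dom A u))" if u: "u \<in> Ar A" for u
  proof -
    have ends: "Dom A u \<in> Ob A" "Cod A u \<in> Ob A"
      using A u by (auto simp: category_def)
    show ?thesis
      by (rule inverses_commute_square[OF B, where a = "\<eta> (Dom A u)" and b = "\<eta> (Cod A u)"])
        (use ends u \<epsilon> \<eta>_hom \<eta>_nat F G in \<open>auto simp: is_functor_def\<close>)
  qed
  then have "nat_trans A B Go Gm Fo Fm \<epsilon>"
    using F G \<epsilon> by (simp add: nat_trans_def)
  with \<epsilon> show ?thesis
    using that by blast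
qed

lemma slice_Ob: "a \<in> Ob (slice C M T) \<longleftrightarrow> snd a \<in> M \<and> snd a \<in> hom C (fst a) T"
  by (auto simp: slice_def)

lemma slice_Ar:
  "x \<in> Ar (slice C M T) \<longleftrightarrow>
     (\<exists>a f b. x = (a, f, b) \<and> a \<in> Ob (slice C M T) \<and> b \<in> Ob (slice C M T) \<and>
        f \<in> hom C (fst a) (fst b) \<and> Comp C (snd b) f = snd a)"
  by (auto simp: slice_def)

lemma slice_Dom [simp]: "Dom (slice C M T) (a, f, b) = a"
  and slice_Cod [simp]: "Cod (slice C M T) (a, f, b) = b"
  and slice_Idt [simp]: "Idt (slice C M T) a = (a, Idt C (fst a), a)"
  and slice_Comp [simp]: "Comp (slice C M T) (b, g, c) (a, f, b') = (a, Comp C g f, c)"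
  and slice_Fo_apply [simp]: "slice_Fo a = fst a"
  and slice_Fm_apply [simp]: "slice_Fm (a, f, b) = f"
  and slice_tau_apply [simp]: "slice_tau a = snd a"
  by (simp_all add: slice_def slice_Fo_def slice_Fm_def slice_tau_def)

lemma slice_hom:
  "x \<in> hom (slice C M T) a b \<longleftrightarrow>
     x = (a, slice_Fm x, b) \<and> a \<in> Ob (slice C M T) \<and> b \<in> Ob (slice C M T) \<and>
     slice_Fm x \<in> hom C (fst a) (fst b) \<and> Comp C (snd b) (slice_Fm x) = snd a"
  unfolding hom_def slice_Ar by (cases x rule: prod_cases3) auto

lemma slice_Fm_Comp: "slice_Fm (Comp (slice C M T) y x) = Comp C (slice_Fm y) (slice_Fm x)"
  by (cases x; cases y) simp

lemma category_slice:
  assumes C: "category C"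
  shows "category (slice C M T)"
proof -
  let ?S = "slice C M T"
  have "\<forall>x \<in> Ar ?S. Dom ?S x \<in> Ob ?S \<and> Cod ?S x \<in> Ob ?S"
    by (auto simp: slice_Ar)
  moreover have "\<forall>a \<in> Ob ?S. Idt ?S a \<in> hom ?S a a"
    using C category_hom_objects[OF C] by (auto simp: slice_hom slice_Ob category_Idt_right category_Idt_hom)
  moreover have "\<forall>x \<in> Ar ?S. \<forall>y \<in> Ar ?S. Cod ?S x = Dom ?S y \<longrightarrow>
      Comp ?S y x \<in> hom ?S (Dom ?S x) (Cod ?S y)"
    using C by (auto simp: slice_Ar slice_hom slice_Ob category_Comp_assoc intro: category_Comp_hom)
  moreover have "\<forall>x \<in> Ar ?S. Comp ?S (Idt ?S (Cod ?S x)) x = x \<and> Comp ?S x (Idt ?S (Dom ?S x)) = x"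
    using C by (auto simp: slice_Ar category_Idt_left category_Idt_right)
  moreover have "\<forall>x \<in> Ar ?S. \<forall>y \<in> Ar ?S. \<forall>z \<in> Ar ?S. Cod ?S x = Dom ?S y \<longrightarrow> Cod ?S y = Dom ?S z \<longrightarrow>
      Comp ?S z (Comp ?S y x) = Comp ?S (Comp ?S z y) x"
    using C by (auto simp: slice_Ar category_Comp_assoc)
  ultimately show ?thesis
    unfolding category_def by blast
qed

lemma is_functor_slice_forget:
  assumes C: "category C"
  shows "is_functor (slice C M T) C slice_Fo slice_Fm"
  unfolding is_functor_def
  using C category_slice[OF C] category_hom_objects[OF C]
  by (auto simp: slice_Ob slice_Ar slice_Fm_Comp)

lemma grading_slice:
  assumes "category C" and "T \<in> Ob C"
  shows "grading C M T (slice C M T) slice_Fo slice_Fm slice_tau"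
  unfolding grading_def
  using assms is_functor_slice_forget[OF assms(1)] by (auto simp: slice_Ob slice_Ar)

lemma slice_hom_eqI:
  "x \<in> hom (slice C M T) a b \<Longrightarrow> y \<in> hom (slice C M T) a b \<Longrightarrow> slice_Fm x = slice_Fm y \<Longrightarrow> x = y"
  by (metis slice_hom)

lemma nat_trans_sliceI:
  assumes C: "category C"
    and F: "is_functor A (slice C M T) Fo Fm" and G: "is_functor A (slice C M T) Go Gm"
    and \<eta>_hom: "\<forall>a \<in> Ob A. \<eta> a \<in> hom (slice C M T) (Fo a) (Go a)"
    and \<eta>_nat: "\<forall>u \<in> Ar A. Comp C (slice_Fm (\<eta> (Cod A u))) (slice_Fm (Fm u)) =
                          Comp C (slice_Fm (Gm u)) (slice_Fm (\<eta> (Dom A u)))"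
  shows "nat_trans A (slice C M T) Fo Fm Go Gm \<eta>"
proof -
  have "Comp (slice C M T) (\<eta> (Cod A u)) (Fm u) = Comp (slice C M T) (Gm u) (\<eta> (Dom A u))"
    if u: "u \<in> Ar A" for u
  proof (rule slice_hom_eqI)
    have ends: "Dom A u \<in> Ob A" "Cod A u \<in> Ob A"
      using F u by (auto simp: is_functor_def category_def)
    show "Comp (slice C M T) (\<eta> (Cod A u)) (Fm u) \<in> hom (slice C M T) (Fo (Dom A u)) (Go (Cod A u))"
      "Comp (slice C M T) (Gm u) (\<eta> (Dom A u)) \<in> hom (slice C M T) (Fo (Dom A u)) (Go (Cod A u))"
      using F G u ends \<eta>_hom category_Comp_hom[OF category_slice[OF C]]
      unfolding is_functor_def by blast+
    show "slice_Fm (Comp (slice C M T) (\<eta> (Cod A u)) (Fm u)) =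
        slice_Fm (Comp (slice C M T) (Gm u) (\<eta> (Dom A u)))"
      using u \<eta>_nat by (simp add: slice_Fm_Comp)
  qed
  then show ?thesis
    using F G \<eta>_hom by (simp add: nat_trans_def)
qed

lemma slice_inverse_hom:
  assumes C: "category C" and f: "(a, f, b) \<in> hom (slice C M T) a b"
    and e: "e \<in> hom C (fst b) (fst a)" and fe: "Comp C f e = Idt C (fst b)"
  shows "(b, e, a) \<in> hom (slice C M T) b a"
proof -
  have f_hom: "f \<in> hom C (fst a) (fst b)" and "snd a = Comp C (snd b) f"
    and b: "snd b \<in> hom C (fst b) T"
    using f by (auto simp: slice_hom slice_Ob)
  then have "Comp C (snd a) e = Comp C (snd b) (Comp C f e)"
    using category_Comp_assoc[OF C e f_hom b] by simp
  also have "\<dots> = snd b"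
    using fe category_Idt_right[OF C b] by simp
  finally show ?thesis
    using f e by (simp add: slice_hom)
qed

definition classify_Fo :: "('a \<Rightarrow> 'o) \<Rightarrow> ('a \<Rightarrow> 'm) \<Rightarrow> 'a \<Rightarrow> 'o \<times> 'm" where
  "classify_Fo Go g d = (Go d, g d)"

definition classify_Fm ::
  "('a, 'b) cat \<Rightarrow> ('a \<Rightarrow> 'o) \<Rightarrow> ('b \<Rightarrow> 'm) \<Rightarrow> ('a \<Rightarrow> 'm) \<Rightarrow> 'b \<Rightarrow> ('o \<times> 'm) \<times> 'm \<times> ('o \<times> 'm)"
  where "classify_Fm Gr Go Gm g u = (classify_Fo Go g (Dom Gr u), Gm u, classify_Fo Go g (Cod Gr u))"

lemma is_functor_classify:
  assumes C: "category C" and G: "grading C M T Gr Go Gm g"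
  shows "is_functor Gr (slice C M T) (classify_Fo Go g) (classify_Fm Gr Go Gm g)"
proof -
  have F: "is_functor Gr C Go Gm"
    and g_hom: "\<forall>d \<in> Ob Gr. g d \<in> hom C (Go d) T \<and> g d \<in> M"
    and cocone: "\<forall>u \<in> Ar Gr. Comp C (g (Cod Gr u)) (Gm u) = g (Dom Gr u)"
    using G by (auto simp: grading_def)
  have Gr: "category Gr"
    using F by (simp add: is_functor_def)
  have "classify_Fm Gr Go Gm g u
      \<in> hom (slice C M T) (classify_Fo Go g (Dom Gr u)) (classify_Fo Go g (Cod Gr u))"
    if u: "u \<in> Ar Gr" for u
  proof -
    have "Dom Gr u \<in> Ob Gr" "Cod Gr u \<in> Ob Gr"
      using Gr u by (auto simp: category_def)
    then show ?thesis
      using u F g_hom cocone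
      by (auto simp: slice_hom slice_Ob classify_Fo_def classify_Fm_def is_functor_def)
  qed
  moreover have "classify_Fm Gr Go Gm g (Idt Gr d) = Idt (slice C M T) (classify_Fo Go g d)"
    if d: "d \<in> Ob Gr" for d
    using d Gr F category_Idt_hom[OF Gr d]
    by (auto simp: classify_Fo_def classify_Fm_def is_functor_def hom_def)
  moreover have "classify_Fm Gr Go Gm g (Comp Gr v u) =
      Comp (slice C M T) (classify_Fm Gr Go Gm g v) (classify_Fm Gr Go Gm g u)"
    if "u \<in> Ar Gr" "v \<in> Ar Gr" "Cod Gr u = Dom Gr v" for u v
    using that Gr F by (auto simp: classify_Fm_def is_functor_def category_def hom_def)
  ultimately show ?thesis
    using C Gr g_hom category_slice[OF C]
    by (simp add: is_functor_def slice_Ob classify_Fo_def)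
qed

lemma grading_mor_classify:
  assumes C: "category C" and G: "grading C M T Gr Go Gm g"
  shows "grading_mor C Gr Go Gm g (slice C M T) slice_Fo slice_Fm slice_tau
           (classify_Fo Go g) (classify_Fm Gr Go Gm g) (\<lambda>d. Idt C (Go d))"
proof -
  have F: "is_functor Gr C Go Gm" and g_hom: "\<forall>d \<in> Ob Gr. g d \<in> hom C (Go d) T"
    using G by (auto simp: grading_def)
  have Fo: "slice_Fo \<circ> classify_Fo Go g = Go" and Fm: "slice_Fm \<circ> classify_Fm Gr Go Gm g = Gm"
    by (simp_all add: fun_eq_iff classify_Fo_def classify_Fm_def)
  have "nat_iso Gr C Go Gm Go Gm (\<lambda>d. Idt C (Go d))"
    using F C
    by (auto simp: nat_iso_def nat_trans_def is_functor_def category_Idt_left category_Idt_right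
        intro: iso_Idt category_Idt_hom)
  then show ?thesis
    unfolding grading_mor_def Fo Fm
    using is_functor_classify[OF C G] g_hom category_Idt_right[OF C]
    by (auto simp: classify_Fo_def)
qed

text \<open>The comparison 2-cell is indexed by the whole morphism (F', f'), arrow map included,
  so that it is literally the assignment required by the pseudoterminality statement.\<close>

definition classify_comparison ::
  "('a \<Rightarrow> 'o) \<Rightarrow> ('a \<Rightarrow> 'm) \<Rightarrow>
   ('a \<Rightarrow> 'o \<times> 'm) \<times> ('b \<Rightarrow> ('o \<times> 'm) \<times> 'm \<times> ('o \<times> 'm)) \<times> ('a \<Rightarrow> 'm) \<Rightarrow>
   'a \<Rightarrow> ('o \<times> 'm) \<times> 'm \<times> ('o \<times> 'm)"
  where "classify_comparison Go g = (\<lambda>(Fo', Fm', f') d. (Fo' d, f' d, classify_Fo Go g d))"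

lemma grading_2cell_classify_comparison:
  assumes C: "category C" and G: "grading C M T Gr Go Gm g"
    and H: "grading_mor C Gr Go Gm g (slice C M T) slice_Fo slice_Fm slice_tau Fo' Fm' f'"
  shows "grading_2cell C Gr (slice C M T) slice_Fm Fo' Fm' f'
           (classify_Fo Go g) (classify_Fm Gr Go Gm g) (\<lambda>d. Idt C (Go d))
           (classify_comparison Go g (Fo', Fm', f'))"
proof -
  have F': "is_functor Gr (slice C M T) Fo' Fm'"
    and f': "nat_trans Gr C (slice_Fo \<circ> Fo') (slice_Fm \<circ> Fm') Go Gm f'"
    and triangle: "\<forall>d \<in> Ob Gr. snd (Fo' d) = Comp C (g d) (f' d)"
    using H by (auto simp: grading_mor_def nat_iso_def)
  have F: "is_functor Gr (slice C M T) (classify_Fo Go g) (classify_Fm Gr Go Gm g)"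
    by (rule is_functor_classify[OF C G])
  have f'_hom: "\<forall>d \<in> Ob Gr. f' d \<in> hom C (fst (Fo' d)) (Go d)"
    using f' by (simp add: nat_trans_def)
  have "classify_comparison Go g (Fo', Fm', f') d \<in> hom (slice C M T) (Fo' d) (classify_Fo Go g d)"
    if d: "d \<in> Ob Gr" for d
    using d F F' f'_hom triangle
    by (simp add: is_functor_def slice_hom classify_comparison_def classify_Fo_def)
  then have "nat_trans Gr (slice C M T) Fo' Fm' (classify_Fo Go g) (classify_Fm Gr Go Gm g)
      (classify_comparison Go g (Fo', Fm', f'))"
    using f' by (intro nat_trans_sliceI[OF C F' F])
      (simp_all add: nat_trans_def classify_comparison_def classify_Fm_def)
  then show ?thesis
    using f'_hom category_Idt_left[OF C]
    by (auto simp: grading_2cell_def classify_comparison_def)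
qed

lemma grading_inv_2cell_classify_comparison:
  assumes C: "category C" and G: "grading C M T Gr Go Gm g"
    and H: "grading_mor C Gr Go Gm g (slice C M T) slice_Fo slice_Fm slice_tau Fo' Fm' f'"
  shows "grading_inv_2cell C Gr (slice C M T) slice_Fm Fo' Fm' f'
           (classify_Fo Go g) (classify_Fm Gr Go Gm g) (\<lambda>d. Idt C (Go d))
           (classify_comparison Go g (Fo', Fm', f'))"
proof -
  let ?S = "slice C M T"
  have F': "is_functor Gr ?S Fo' Fm'"
    and f': "nat_iso Gr C (slice_Fo \<circ> Fo') (slice_Fm \<circ> Fm') Go Gm f'"
    using H by (auto simp: grading_mor_def)
  have F: "is_functor Gr ?S (classify_Fo Go g) (classify_Fm Gr Go Gm g)"
    by (rule is_functor_classify[OF C G])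
  have \<theta>: "grading_2cell C Gr ?S slice_Fm Fo' Fm' f' (classify_Fo Go g) (classify_Fm Gr Go Gm g)
      (\<lambda>d. Idt C (Go d)) (classify_comparison Go g (Fo', Fm', f'))"
    by (rule grading_2cell_classify_comparison[OF C G H])
  obtain \<epsilon> where \<epsilon>: "nat_trans Gr C Go Gm (slice_Fo \<circ> Fo') (slice_Fm \<circ> Fm') \<epsilon>"
    and \<epsilon>_inv: "\<forall>d \<in> Ob Gr. Comp C (\<epsilon> d) (f' d) = Idt C (fst (Fo' d)) \<and> Comp C (f' d) (\<epsilon> d) = Idt C (Go d)"
    using nat_iso_obtain_inverse[OF f'] by auto
  define \<gamma> where "\<gamma> d = (classify_Fo Go g d, \<epsilon> d, Fo' d)" for d
  have "\<gamma> d \<in> hom ?S (classify_Fo Go g d) (Fo' d)" if d: "d \<in> Ob Gr" for d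
    unfolding \<gamma>_def
  proof (rule slice_inverse_hom[OF C])
    show "(Fo' d, f' d, classify_Fo Go g d) \<in> hom ?S (Fo' d) (classify_Fo Go g d)"
      using \<theta> d by (simp add: grading_2cell_def nat_trans_def classify_comparison_def)
    show "\<epsilon> d \<in> hom C (fst (classify_Fo Go g d)) (fst (Fo' d))"
      "Comp C (f' d) (\<epsilon> d) = Idt C (fst (classify_Fo Go g d))"
      using \<epsilon> \<epsilon>_inv d by (simp_all add: nat_trans_def classify_Fo_def)
  qed
  then have "nat_trans Gr ?S (classify_Fo Go g) (classify_Fm Gr Go Gm g) Fo' Fm' \<gamma>"
    using \<epsilon> by (intro nat_trans_sliceI[OF C F F'])
      (simp_all add: nat_trans_def \<gamma>_def classify_Fm_def)
  then have "grading_2cell C Gr ?S slice_Fm (classify_Fo Go g) (classify_Fm Gr Go Gm g)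
      (\<lambda>d. Idt C (Go d)) Fo' Fm' f' \<gamma>"
    using \<epsilon>_inv by (simp add: grading_2cell_def \<gamma>_def)
  moreover have "\<forall>d \<in> Ob Gr. Comp ?S (\<gamma> d) (classify_comparison Go g (Fo', Fm', f') d) = Idt ?S (Fo' d) \<and>
      Comp ?S (classify_comparison Go g (Fo', Fm', f') d) (\<gamma> d) = Idt ?S (classify_Fo Go g d)"
    using \<epsilon>_inv by (simp add: \<gamma>_def classify_comparison_def classify_Fo_def)
  ultimately show ?thesis
    using \<theta> unfolding grading_inv_2cell_def by blast
qed

lemma classify_comparison_natural:
  assumes \<alpha>: "grading_2cell C Gr (slice C M T) slice_Fm Fo' Fm' f' Fo'' Fm'' f'' \<alpha>"
    and d: "d \<in> Ob Gr"
  shows "Comp (slice C M T) (classify_comparison Go g (Fo'', Fm'', f'') d) (\<alpha> d) =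
         classify_comparison Go g (Fo', Fm', f') d"
proof -
  have "\<alpha> d \<in> hom (slice C M T) (Fo' d) (Fo'' d)"
    and f': "Comp C (f'' d) (slice_Fm (\<alpha> d)) = f' d"
    using \<alpha> d by (auto simp: grading_2cell_def nat_trans_def)
  then have \<alpha>_triple: "\<alpha> d = (Fo' d, slice_Fm (\<alpha> d), Fo'' d)"
    by (simp add: slice_hom)
  show ?thesis
    by (subst \<alpha>_triple) (simp add: f' classify_comparison_def)
qed

theorem theorem2p3:
  fixes C :: "('o, 'm) cat" and M :: "'m set" and T :: 'o
  assumes "category C" and "M \<subseteq> Ar C" and "T \<in> Ob C"
  shows "grading C M T (slice C M T) slice_Fo slice_Fm slice_tau \<and>
    (\<forall>(Gr :: ('a, 'b) cat) Go Gm g. grading C M T Gr Go Gm g \<longrightarrow>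
      (\<exists>Fo Fm f.
         grading_mor C Gr Go Gm g (slice C M T) slice_Fo slice_Fm slice_tau Fo Fm f \<and>
         (\<exists>\<theta> :: ('a \<Rightarrow> 'o \<times> 'm) \<times> ('b \<Rightarrow> ('o \<times> 'm) \<times> 'm \<times> ('o \<times> 'm)) \<times> ('a \<Rightarrow> 'm)
                 \<Rightarrow> 'a \<Rightarrow> ('o \<times> 'm) \<times> 'm \<times> ('o \<times> 'm).
            (\<forall>Fo' Fm' f'.
               grading_mor C Gr Go Gm g (slice C M T) slice_Fo slice_Fm slice_tau Fo' Fm' f' \<longrightarrow>
               grading_inv_2cell C Gr (slice C M T) slice_Fm Fo' Fm' f' Fo Fm f (\<theta> (Fo', Fm', f'))) \<and>
            (\<forall>Fo' Fm' f' Fo'' Fm'' f'' \<alpha>.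
               grading_mor C Gr Go Gm g (slice C M T) slice_Fo slice_Fm slice_tau Fo' Fm' f' \<longrightarrow>
               grading_mor C Gr Go Gm g (slice C M T) slice_Fo slice_Fm slice_tau Fo'' Fm'' f'' \<longrightarrow>
               grading_2cell C Gr (slice C M T) slice_Fm Fo' Fm' f' Fo'' Fm'' f'' \<alpha> \<longrightarrow>
               (\<forall>d \<in> Ob Gr. Comp (slice C M T) (\<theta> (Fo'', Fm'', f'') d) (\<alpha> d)
                             = \<theta> (Fo', Fm', f') d)))))"
proof (intro conjI allI impI exI)
  show "grading C M T (slice C M T) slice_Fo slice_Fm slice_tau"
    by (rule grading_slice[OF assms(1,3)])
next
  fix Gr :: "('a, 'b) cat" and Go Gm g
  assume "grading C M T Gr Go Gm g"
  then show "grading_mor C Gr Go Gm g (slice C M T) slice_Fo slice_Fm slice_tau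
      (classify_Fo Go g) (classify_Fm Gr Go Gm g) (\<lambda>d. Idt C (Go d))"
    by (rule grading_mor_classify[OF assms(1)])
next
  fix Gr :: "('a, 'b) cat" and Go Gm g Fo' Fm' f'
  assume "grading C M T Gr Go Gm g"
    and "grading_mor C Gr Go Gm g (slice C M T) slice_Fo slice_Fm slice_tau Fo' Fm' f'"
  then show "grading_inv_2cell C Gr (slice C M T) slice_Fm Fo' Fm' f'
      (classify_Fo Go g) (classify_Fm Gr Go Gm g) (\<lambda>d. Idt C (Go d))
      (classify_comparison Go g (Fo', Fm', f'))"
    by (rule grading_inv_2cell_classify_comparison[OF assms(1)])
next
  fix Gr :: "('a, 'b) cat" and Go Gm g Fo' Fm' f' Fo'' Fm'' f'' \<alpha>
  assume "grading_2cell C Gr (slice C M T) slice_Fm Fo' Fm' f' Fo'' Fm'' f'' \<alpha>"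
  then show "\<forall>d \<in> Ob Gr. Comp (slice C M T) (classify_comparison Go g (Fo'', Fm'', f'') d) (\<alpha> d)
      = classify_comparison Go g (Fo', Fm', f') d"
    by (blast intro: classify_comparison_natural)
qed

end
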